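(* Let $L$ be a totally ordered normal incline and let $A=(a_{ij})$ be a $3\times 3$ completely positive matrix over $L$. Then at least two of the following inequalities hold: $$a_{11}\otimes a_{23}\ge a_{12}\otimes a_{13},\qquad a_{22}\otimes a_{13}\ge a_{12}\otimes a_{23},\qquad a_{33}\otimes a_{12}\ge a_{13}\otimes a_{23}.$$
   Context: An incline is a nonempty set $L$ with binary operations $\oplus,\otimes$ such that $(L,\oplus)$ is a semilattice ($\oplus$ associative, commutative, idempotent), $(L,\otimes)$ is a semigroup, $x\otimes(y\oplus z)=(x\otimes y)\oplus(x\otimes z)$ and $x\oplus(x\otimes y)=x$ for all $x,y,z$. The order is $x\le y\iff x\oplus y=y$; $L$ is totally ordered if this order is total, and commutative if $\otimes$ is commutative. An r-ideal is a nonempty $J\subseteq L$ closed under $\oplus$ and under multiplication by arbitrary elements of $L$; a lattice ideal is a nonempty $J\subseteq L$ closed under $\oplus$ and downward closed. A commutative incline $L$ is normal if it has an additive identity $\mathbf{0}$ and a multiplicative identity $\mathbf{1}$ and: every singly generated r-ideal is a lattice ideal (LI-property); for each $x$ there is a unique $c$ with $c\otimes c=x$; $x\otimes y\le(x\otimes x)\oplus(y\otimes y)$ for all $x,y$. Matrix product: $(BC)_{ij}=\bigoplus_k b_{ik}\otimes c_{kj}$; $B^T$ is the transpose. $A$ is completely positive if $A=BB^T$ for some $3\times k$ matrix $B$ over $L$ all of whose entries are of the form $c\otimes c$. *)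

theory Defs
  imports Main
begin

text \<open>An incline on the carrier type 'a, with operations p (addition, oplus) and m (multiplication, otimes).\<close>
definition incline :: "('a \<Rightarrow> 'a \<Rightarrow> 'a) \<Rightarrow> ('a \<Rightarrow> 'a \<Rightarrow> 'a) \<Rightarrow> bool" where
  "incline p m \<longleftrightarrow>
     (\<forall>x y z. p (p x y) z = p x (p y z)) \<and> (\<forall>x y. p x y = p y x) \<and> (\<forall>x. p x x = x) \<and>
     (\<forall>x y z. m (m x y) z = m x (m y z)) \<and>
     (\<forall>x y z. m x (p y z) = p (m x y) (m x z)) \<and>
     (\<forall>x y. p x (m x y) = x)"

definition inc_le :: "('a \<Rightarrow> 'a \<Rightarrow> 'a) \<Rightarrow> 'a \<Rightarrow> 'a \<Rightarrow> bool" where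
  "inc_le p x y \<longleftrightarrow> p x y = y"

definition totally_ordered :: "('a \<Rightarrow> 'a \<Rightarrow> 'a) \<Rightarrow> bool" where
  "totally_ordered p \<longleftrightarrow> (\<forall>x y. inc_le p x y \<or> inc_le p y x)"

definition commutative_incline :: "('a \<Rightarrow> 'a \<Rightarrow> 'a) \<Rightarrow> ('a \<Rightarrow> 'a \<Rightarrow> 'a) \<Rightarrow> bool" where
  "commutative_incline p m \<longleftrightarrow> incline p m \<and> (\<forall>x y. m x y = m y x)"

definition r_ideal :: "('a \<Rightarrow> 'a \<Rightarrow> 'a) \<Rightarrow> ('a \<Rightarrow> 'a \<Rightarrow> 'a) \<Rightarrow> 'a set \<Rightarrow> bool" where
  "r_ideal p m J \<longleftrightarrow> J \<noteq> {} \<and> (\<forall>x\<in>J. \<forall>y\<in>J. p x y \<in> J) \<and>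
     (\<forall>x\<in>J. \<forall>y. m x y \<in> J \<and> m y x \<in> J)"

definition lattice_ideal :: "('a \<Rightarrow> 'a \<Rightarrow> 'a) \<Rightarrow> 'a set \<Rightarrow> bool" where
  "lattice_ideal p J \<longleftrightarrow> J \<noteq> {} \<and> (\<forall>x\<in>J. \<forall>y\<in>J. p x y \<in> J) \<and>
     (\<forall>x\<in>J. \<forall>y. inc_le p y x \<longrightarrow> y \<in> J)"

definition r_ideal_gen :: "('a \<Rightarrow> 'a \<Rightarrow> 'a) \<Rightarrow> ('a \<Rightarrow> 'a \<Rightarrow> 'a) \<Rightarrow> 'a \<Rightarrow> 'a set" where
  "r_ideal_gen p m x = \<Inter>{J. r_ideal p m J \<and> x \<in> J}"

definition normal_incline :: "('a \<Rightarrow> 'a \<Rightarrow> 'a) \<Rightarrow> ('a \<Rightarrow> 'a \<Rightarrow> 'a) \<Rightarrow> bool" where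
  "normal_incline p m \<longleftrightarrow> commutative_incline p m \<and>
     (\<exists>z. \<forall>x. p z x = x) \<and> (\<exists>u. \<forall>x. m u x = x \<and> m x u = x) \<and>
     (\<forall>x. lattice_ideal p (r_ideal_gen p m x)) \<and>
     (\<forall>x. \<exists>!c. m c c = x) \<and>
     (\<forall>x y. inc_le p (m x y) (p (m x x) (m y y)))"

primrec isum :: "('a \<Rightarrow> 'a \<Rightarrow> 'a) \<Rightarrow> (nat \<Rightarrow> 'a) \<Rightarrow> nat \<Rightarrow> 'a" where
  "isum p f 0 = f 0"
| "isum p f (Suc n) = p (isum p f n) (f (Suc n))"

text \<open>A (3x3, indices 0..2) is completely positive: A = B B^T for a 3 x k matrix B
  (columns 0..n, k = n+1) all of whose entries are squares c \<otimes> c.\<close>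
definition completely_positive ::
  "('a \<Rightarrow> 'a \<Rightarrow> 'a) \<Rightarrow> ('a \<Rightarrow> 'a \<Rightarrow> 'a) \<Rightarrow> (nat \<Rightarrow> nat \<Rightarrow> 'a) \<Rightarrow> bool" where
  "completely_positive p m A \<longleftrightarrow>
     (\<exists>(B::nat \<Rightarrow> nat \<Rightarrow> 'a) n.
        (\<forall>i<3. \<forall>l\<le>n. \<exists>c. B i l = m c c) \<and>
        (\<forall>i<3. \<forall>j<3. A i j = isum p (\<lambda>l. m (B i l) (B j l)) n))"

end

theory Submission
  imports Defs
begin

text \<open>In a totally ordered incline a finite sum equals one of its summands. Hence every entry
  of \<open>A = B B\<^sup>T\<close> is a single product \<open>a\<^sub>i\<^sub>j = b\<^sub>i \<otimes> b\<^sub>j\<close>, taken from one column of \<open>B\<close>, with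
  \<open>b\<^sub>i \<otimes> b\<^sub>i \<le> a\<^sub>i\<^sub>i\<close> and \<open>b\<^sub>j \<otimes> b\<^sub>j \<le> a\<^sub>j\<^sub>j\<close>. Comparing \<open>b\<^sub>j \<otimes> a\<^sub>i\<^sub>h\<close> with \<open>b\<^sub>i \<otimes> a\<^sub>j\<^sub>h\<close> shows that
  for each pair \<open>{i, j}\<close> one of the two inequalities attached to \<open>i\<close> and \<open>j\<close> holds; the three
  pairs together force two of the three inequalities.\<close>

locale total_comm_incline =
  fixes p m :: "'a \<Rightarrow> 'a \<Rightarrow> 'a"
  assumes commutative: "commutative_incline p m"
    and total: "totally_ordered p"
begin

abbreviation le :: "'a \<Rightarrow> 'a \<Rightarrow> bool" (infix "\<preceq>" 50)
  where "x \<preceq> y \<equiv> inc_le p x y"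

abbreviation mult :: "'a \<Rightarrow> 'a \<Rightarrow> 'a" (infixl "\<cdot>" 70)
  where "x \<cdot> y \<equiv> m x y"

lemma add_assoc: "p (p x y) z = p x (p y z)"
  and add_commute: "p x y = p y x"
  and add_idem: "p x x = x"
  and mult_assoc: "x \<cdot> y \<cdot> z = x \<cdot> (y \<cdot> z)"
  and mult_commute: "x \<cdot> y = y \<cdot> x"
  and distrib_left: "x \<cdot> p y z = p (x \<cdot> y) (x \<cdot> z)"
  using commutative unfolding commutative_incline_def incline_def by auto

lemma le_total: "x \<preceq> y \<or> y \<preceq> x"
  using total unfolding totally_ordered_def by blast

lemma le_trans [trans]: "x \<preceq> y \<Longrightarrow> y \<preceq> z \<Longrightarrow> x \<preceq> z"
  unfolding inc_le_def by (metis add_assoc)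

lemma mult_left_mono: "y \<preceq> z \<Longrightarrow> x \<cdot> y \<preceq> x \<cdot> z"
  unfolding inc_le_def by (metis distrib_left)

lemma add_eq_arg: "p x y = x \<or> p x y = y"
  using le_total unfolding inc_le_def by (metis add_commute)

lemma isum_upper: "l \<le> n \<Longrightarrow> f l \<preceq> isum p f n"
proof (induction n)
  case 0
  then show ?case by (simp add: inc_le_def add_idem)
next
  case (Suc n)
  show ?case
  proof (cases "l = Suc n")
    case True
    then show ?thesis unfolding inc_le_def by (metis isum.simps(2) add_assoc add_commute add_idem)
  next
    case False
    with Suc have "p (f l) (isum p f n) = isum p f n" by (simp add: inc_le_def)
    then show ?thesis by (simp add: inc_le_def) (metis add_assoc)
  qed
qed

lemma isum_attained: "\<exists>k\<le>n. isum p f n = f k"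
proof (induction n)
  case 0
  then show ?case by auto
next
  case (Suc n)
  then obtain k where "k \<le> n" "isum p f n = f k" by auto
  then show ?case using add_eq_arg[of "isum p f n" "f (Suc n)"]
    by (metis isum.simps(2) le_SucI order_refl)
qed

lemma rank_one_alternative:
  assumes "a\<^sub>i\<^sub>j = b\<^sub>i \<cdot> b\<^sub>j" and "b\<^sub>i \<cdot> b\<^sub>i \<preceq> a\<^sub>i\<^sub>i" and "b\<^sub>j \<cdot> b\<^sub>j \<preceq> a\<^sub>j\<^sub>j"
  shows "a\<^sub>i\<^sub>j \<cdot> x \<preceq> a\<^sub>i\<^sub>i \<cdot> y \<or> a\<^sub>i\<^sub>j \<cdot> y \<preceq> a\<^sub>j\<^sub>j \<cdot> x"
proof (cases "b\<^sub>j \<cdot> x \<preceq> b\<^sub>i \<cdot> y")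
  case True
  have "a\<^sub>i\<^sub>j \<cdot> x = b\<^sub>i \<cdot> (b\<^sub>j \<cdot> x)" using assms(1) by (simp add: mult_assoc)
  also have "\<dots> \<preceq> b\<^sub>i \<cdot> (b\<^sub>i \<cdot> y)" using True by (rule mult_left_mono)
  also have "\<dots> = y \<cdot> (b\<^sub>i \<cdot> b\<^sub>i)" by (metis mult_assoc mult_commute)
  also have "\<dots> \<preceq> y \<cdot> a\<^sub>i\<^sub>i" using assms(2) by (rule mult_left_mono)
  finally show ?thesis by (metis mult_commute)
next
  case False
  then have "b\<^sub>i \<cdot> y \<preceq> b\<^sub>j \<cdot> x" using le_total by blast
  have "a\<^sub>i\<^sub>j \<cdot> y = b\<^sub>j \<cdot> (b\<^sub>i \<cdot> y)" using assms(1) by (metis mult_assoc mult_commute)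
  also have "\<dots> \<preceq> b\<^sub>j \<cdot> (b\<^sub>j \<cdot> x)" using \<open>b\<^sub>i \<cdot> y \<preceq> b\<^sub>j \<cdot> x\<close> by (rule mult_left_mono)
  also have "\<dots> = x \<cdot> (b\<^sub>j \<cdot> b\<^sub>j)" by (metis mult_assoc mult_commute)
  also have "\<dots> \<preceq> x \<cdot> a\<^sub>j\<^sub>j" using assms(3) by (rule mult_left_mono)
  finally show ?thesis by (metis mult_commute)
qed

lemma completely_positive_sym:
  assumes "completely_positive p m A" and "i < 3" and "j < 3"
  shows "A j i = A i j"
  using assms mult_commute unfolding completely_positive_def by auto

lemma completely_positive_entry_rank_one:
  assumes "completely_positive p m A" and "i < 3" and "j < 3"
  obtains b\<^sub>i b\<^sub>j where "A i j = b\<^sub>i \<cdot> b\<^sub>j" and "b\<^sub>i \<cdot> b\<^sub>i \<preceq> A i i" and "b\<^sub>j \<cdot> b\<^sub>j \<preceq> A j j"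
proof -
  obtain B n where B: "\<forall>i<3. \<forall>j<3. A i j = isum p (\<lambda>l. B i l \<cdot> B j l) n"
    using assms(1) unfolding completely_positive_def by blast
  obtain k where "k \<le> n" and "A i j = B i k \<cdot> B j k"
    using isum_attained[of n "\<lambda>l. B i l \<cdot> B j l"] B assms(2,3) by auto
  moreover have "B i k \<cdot> B i k \<preceq> A i i" and "B j k \<cdot> B j k \<preceq> A j j"
    using isum_upper[OF \<open>k \<le> n\<close>] B assms(2,3) by simp_all
  ultimately show thesis using that by blast
qed

lemma completely_positive_pair_alternative:
  assumes "completely_positive p m A" and "i < 3" and "j < 3"
  shows "A i j \<cdot> A i h \<preceq> A i i \<cdot> A j h \<or> A i j \<cdot> A j h \<preceq> A j j \<cdot> A i h"
  using completely_positive_entry_rank_one[OF assms] rank_one_alternative by metis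

end

theorem mainTheorem9:
  fixes p m :: "'a \<Rightarrow> 'a \<Rightarrow> 'a" and A :: "nat \<Rightarrow> nat \<Rightarrow> 'a"
  assumes "normal_incline p m" and "totally_ordered p"
    and "completely_positive p m A"
  shows "let I1 = inc_le p (m (A 0 1) (A 0 2)) (m (A 0 0) (A 1 2));
             I2 = inc_le p (m (A 0 1) (A 1 2)) (m (A 1 1) (A 0 2));
             I3 = inc_le p (m (A 0 2) (A 1 2)) (m (A 2 2) (A 0 1))
         in (I1 \<and> I2) \<or> (I1 \<and> I3) \<or> (I2 \<and> I3)"
proof -
  interpret total_comm_incline p m
    using assms(1,2) by unfold_locales (simp_all add: normal_incline_def)
  have sym: "A 1 0 = A 0 1" "A 2 0 = A 0 2" "A 2 1 = A 1 2"
    using completely_positive_sym[OF assms(3)] by simp_all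
  have "inc_le p (m (A 0 1) (A 0 2)) (m (A 0 0) (A 1 2)) \<or>
        inc_le p (m (A 0 1) (A 1 2)) (m (A 1 1) (A 0 2))"
    using completely_positive_pair_alternative[OF assms(3), of 0 1 2] by simp
  moreover have "inc_le p (m (A 0 1) (A 0 2)) (m (A 0 0) (A 1 2)) \<or>
        inc_le p (m (A 0 2) (A 1 2)) (m (A 2 2) (A 0 1))"
    using completely_positive_pair_alternative[OF assms(3), of 0 2 1] sym mult_commute by simp
  moreover have "inc_le p (m (A 0 1) (A 1 2)) (m (A 1 1) (A 0 2)) \<or>
        inc_le p (m (A 0 2) (A 1 2)) (m (A 2 2) (A 0 1))"
    using completely_positive_pair_alternative[OF assms(3), of 1 2 0] sym mult_commute by simp
  ultimately show ?thesis unfolding Let_def by blast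
qed

end
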